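(* $\operatorname{cf}\mathfrak s\geq\mathfrak h$.
   Context: The splitting number $\mathfrak s$ is the least cardinality of a family $\mathcal S\subseteq[\omega]^\omega$ such that for every $A\in[\omega]^\omega$ there is $S\in\mathcal S$ with both $A\cap S$ and $A\setminus S$ infinite. The cardinal $\mathfrak h$ is the smallest cardinal such that there exist $\mathfrak h$ sequentially compact topological spaces whose product is not sequentially compact (a space is sequentially compact if every sequence has a convergent subsequence). *)

theory Defs
  imports "HOL-Analysis.Analysis"
begin

definition splitting_family :: "nat set set \<Rightarrow> bool" where
  "splitting_family F \<longleftrightarrow> (\<forall>S\<in>F. infinite S) \<and>
     (\<forall>A::nat set. infinite A \<longrightarrow> (\<exists>S\<in>F. infinite (A \<inter> S) \<and> infinite (A - S)))"

definition split_num :: "nat set rel" where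
  "split_num = card_of (SOME F. splitting_family F \<and> (\<forall>G. splitting_family G \<longrightarrow> (card_of F, card_of G) \<in> ordLeq))"

definition seq_compact_space :: "'a topology \<Rightarrow> bool" where
  "seq_compact_space X \<longleftrightarrow>
     (\<forall>\<sigma>::nat \<Rightarrow> 'a. range \<sigma> \<subseteq> topspace X \<longrightarrow>
        (\<exists>r x. strict_mono r \<and> limitin X (\<sigma> \<circ> r) x sequentially))"

definition h_witness :: "'i set \<Rightarrow> ('i \<Rightarrow> 'a topology) \<Rightarrow> bool" where
  "h_witness I X \<longleftrightarrow> (\<forall>i\<in>I. seq_compact_space (X i)) \<and>
     \<not> seq_compact_space (product_topology X I)"

end

theory Submission
  imports Defs
begin

text \<open>Fix a splitting family \<open>F\<close> of least size \<open>s\<close>, well-ordered in type \<open>|F|\<close>, and a cofinal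
  \<open>I \<subseteq> F\<close> of size \<open>cf s\<close>. Each initial segment \<open>G\<^sub>k\<close> (\<open>k \<in> I\<close>) has size below \<open>s\<close>, so every
  infinite set has an infinite subset split by no member of \<open>G\<^sub>k\<close>, and Zorn's lemma yields a
  maximal almost disjoint family \<open>\<A>\<^sub>k\<close> of such sets. The \<open>\<Psi>\<close>-space of \<open>\<A>\<^sub>k\<close> with a point at
  infinity adjoined is sequentially compact. In the product over \<open>I\<close>, the sequence of
  isolated points \<open>n\<close> has no convergent subsequence: a limit in coordinate \<open>k\<close> must be a member
  of \<open>\<A>\<^sub>k\<close> almost containing the range of the subsequence, yet the \<open>G\<^sub>k\<close> exhaust \<open>F\<close>, so some
  \<open>G\<^sub>k\<close> contains a set splitting that range.\<close>

unbundle cardinal_syntax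

definition unsplit_by :: "'a set set \<Rightarrow> 'a set \<Rightarrow> bool" where
  "unsplit_by G B \<longleftrightarrow> (\<forall>S\<in>G. finite (B \<inter> S) \<or> finite (B - S))"

definition almost_disjoint :: "'a set set \<Rightarrow> bool" where
  "almost_disjoint AA \<longleftrightarrow> pairwise (\<lambda>B B'. finite (B \<inter> B')) AA"

definition maximal_almost_disjoint :: "'a set set \<Rightarrow> bool" where
  "maximal_almost_disjoint AA \<longleftrightarrow>
     almost_disjoint AA \<and> (\<forall>C. infinite C \<longrightarrow> (\<exists>B\<in>AA. infinite (C \<inter> B)))"

definition psi_nbhd :: "'a set \<Rightarrow> 'a set set" where
  "psi_nbhd B = insert B ((\<lambda>n. {n}) ` B)"

text \<open>The space lives on \<open>'a set\<close>: the singletons \<open>{n}\<close> stand for the points \<open>n\<close>, the members of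
  \<open>AA\<close> for the remaining points of the \<open>\<Psi>\<close>-space, \<open>{}\<close> is the point at infinity, and all other
  sets are isolated points that merely fill up the type.\<close>

definition psi_open :: "'a set set \<Rightarrow> 'a set set \<Rightarrow> bool" where
  "psi_open AA U \<longleftrightarrow> (\<forall>B\<in>U \<inter> AA. finite {n\<in>B. {n} \<notin> U}) \<and>
     ({} \<in> U \<longrightarrow> (\<exists>CC. finite CC \<and> - U \<subseteq> \<Union>(psi_nbhd ` CC)))"

lemma istopology_psi_open: "istopology (psi_open AA)"
  unfolding istopology_def
proof (intro conjI allI impI)
  fix S T assume S: "psi_open AA S" and T: "psi_open AA T"
  show "psi_open AA (S \<inter> T)"
    unfolding psi_open_def
  proof (intro conjI ballI impI)
    fix B assume "B \<in> S \<inter> T \<inter> AA"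
    then have "finite ({n\<in>B. {n} \<notin> S} \<union> {n\<in>B. {n} \<notin> T})"
      using S T unfolding psi_open_def by auto
    then show "finite {n\<in>B. {n} \<notin> S \<inter> T}"
      by (rule finite_subset[rotated]) auto
  next
    assume "{} \<in> S \<inter> T"
    then obtain CS CT where "finite CS" "- S \<subseteq> \<Union>(psi_nbhd ` CS)"
      and "finite CT" "- T \<subseteq> \<Union>(psi_nbhd ` CT)"
      using S T unfolding psi_open_def by auto
    then show "\<exists>CC. finite CC \<and> - (S \<inter> T) \<subseteq> \<Union>(psi_nbhd ` CC)"
      by (intro exI[of _ "CS \<union> CT"]) auto
  qed
next
  fix K assume K: "\<forall>U\<in>K. psi_open AA U"
  show "psi_open AA (\<Union>K)"
    unfolding psi_open_def
  proof (intro conjI ballI impI)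
    fix B assume "B \<in> \<Union>K \<inter> AA"
    then obtain U where "U \<in> K" "B \<in> U \<inter> AA" by auto
    then have "finite {n\<in>B. {n} \<notin> U}" using K unfolding psi_open_def by auto
    then show "finite {n\<in>B. {n} \<notin> \<Union>K}"
      by (rule finite_subset[rotated]) (use \<open>U \<in> K\<close> in auto)
  next
    assume "{} \<in> \<Union>K"
    then obtain U where "U \<in> K" "{} \<in> U" by auto
    then obtain CC where "finite CC" "- U \<subseteq> \<Union>(psi_nbhd ` CC)"
      using K unfolding psi_open_def by auto
    then show "\<exists>CC. finite CC \<and> - \<Union>K \<subseteq> \<Union>(psi_nbhd ` CC)"
      using \<open>U \<in> K\<close> by blast
  qed
qed

definition psi_topology :: "'a set set \<Rightarrow> 'a set topology" where
  "psi_topology AA = topology (psi_open AA)"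

lemma openin_psi_topology: "openin (psi_topology AA) U \<longleftrightarrow> psi_open AA U"
  by (simp add: psi_topology_def topology_inverse'[OF istopology_psi_open])

lemma topspace_psi_topology: "topspace (psi_topology AA) = UNIV"
proof -
  have "psi_open AA UNIV" unfolding psi_open_def by auto
  then show ?thesis by (metis openin_psi_topology openin_subset top.extremum_uniqueI)
qed

lemma psi_open_isolated: "x \<noteq> {} \<Longrightarrow> x \<notin> AA \<Longrightarrow> psi_open AA {x}"
  unfolding psi_open_def by auto

lemma psi_open_psi_nbhd:
  assumes "B \<noteq> {}"
  shows "psi_open AA (psi_nbhd B)"
proof -
  have "{n\<in>B'. {n} \<notin> psi_nbhd B} = {}" if "B' \<in> psi_nbhd B" for B'
    using that by (auto simp: psi_nbhd_def)
  moreover have "{} \<notin> psi_nbhd B"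
    using assms by (auto simp: psi_nbhd_def)
  ultimately show ?thesis
    unfolding psi_open_def by (metis IntD1 finite.emptyI)
qed

lemma psi_open_Compl_psi_nbhd:
  assumes "almost_disjoint AA" "B \<in> AA"
  shows "psi_open AA (- psi_nbhd B)"
  unfolding psi_open_def
proof (intro conjI ballI impI)
  fix B' assume B': "B' \<in> - psi_nbhd B \<inter> AA"
  then have "finite (B' \<inter> B)"
    using assms unfolding almost_disjoint_def pairwise_def psi_nbhd_def by auto
  then show "finite {n \<in> B'. {n} \<notin> - psi_nbhd B}"
    by (rule finite_subset[rotated]) (auto simp: psi_nbhd_def)
qed (intro exI[of _ "{B}"], auto)

lemma finite_vimage_finite_fibres:
  assumes "\<And>x. finite (f -` {x})" "finite V"
  shows "finite (f -` V)"
proof -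
  have "f -` V = (\<Union>x\<in>V. f -` {x})" by auto
  then show ?thesis using assms by simp
qed

lemma eventually_not_in_finite_fibres:
  assumes "\<And>x. finite (\<sigma> -` {x})" "finite V"
  shows "eventually (\<lambda>j. \<sigma> j \<notin> V) sequentially"
  unfolding cofinite_eq_sequentially[symmetric] eventually_cofinite
  using finite_vimage_finite_fibres[OF assms] by (simp add: vimage_def)

lemma finite_fibres_subsequence:
  fixes r :: "nat \<Rightarrow> nat"
  assumes "\<And>x. finite (\<sigma> -` {x})" "strict_mono r"
  shows "finite ((\<sigma> \<circ> r) -` {x})"
  using finite_vimageI[OF assms(1) strict_mono_imp_inj_on[OF assms(2)]]
  by (simp add: vimage_comp)

lemma limitin_psi_topology_empty:
  assumes "\<And>x. finite (\<sigma> -` {x})" "\<And>j. \<sigma> j \<notin> range (\<lambda>n. {n})"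
  shows "limitin (psi_topology AA) \<sigma> {} sequentially"
  unfolding limitin_def topspace_psi_topology openin_psi_topology
proof (intro conjI allI impI UNIV_I)
  fix U assume "psi_open AA U \<and> {} \<in> U"
  then obtain CC where CC: "finite CC" "- U \<subseteq> \<Union>(psi_nbhd ` CC)"
    unfolding psi_open_def by blast
  show "eventually (\<lambda>j. \<sigma> j \<in> U) sequentially"
  proof (rule eventually_mono[OF eventually_not_in_finite_fibres[OF assms(1) CC(1)]])
    fix j assume "\<sigma> j \<notin> CC"
    then show "\<sigma> j \<in> U" using CC(2) assms(2)[of j] by (auto simp: psi_nbhd_def)
  qed
qed

lemma limitin_psi_topology_member:
  assumes "B \<in> AA" "\<And>x. finite (\<sigma> -` {x})" "\<And>j. \<sigma> j \<in> (\<lambda>n. {n}) ` B"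
  shows "limitin (psi_topology AA) \<sigma> B sequentially"
  unfolding limitin_def topspace_psi_topology openin_psi_topology
proof (intro conjI allI impI UNIV_I)
  fix U assume "psi_open AA U \<and> B \<in> U"
  then have "finite ((\<lambda>n. {n}) ` {n\<in>B. {n} \<notin> U})"
    using assms(1) unfolding psi_open_def by auto
  from eventually_not_in_finite_fibres[OF assms(2) this]
  show "eventually (\<lambda>j. \<sigma> j \<in> U) sequentially"
    by (rule eventually_mono) (use assms(3) in force)
qed

lemma seq_compact_psi_topology:
  assumes maximal: "\<And>C. infinite C \<Longrightarrow> \<exists>B\<in>AA. infinite (C \<inter> B)"
  shows "seq_compact_space (psi_topology AA)"
  unfolding seq_compact_space_def
proof (intro allI impI)
  fix \<sigma> :: "nat \<Rightarrow> 'a set"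
  show "\<exists>r x. strict_mono r \<and> limitin (psi_topology AA) (\<sigma> \<circ> r) x sequentially"
  proof (cases "\<exists>x. infinite (\<sigma> -` {x})")
    case True
    then obtain x where "infinite (\<sigma> -` {x})" by blast
    from infinite_enumerate[OF this]
    obtain r :: "nat \<Rightarrow> nat" where "strict_mono r" "\<And>j. r j \<in> \<sigma> -` {x}"
      by blast
    then have "limitin (psi_topology AA) (\<sigma> \<circ> r) x sequentially"
      by (intro limitin_eventually) (simp_all add: topspace_psi_topology)
    with \<open>strict_mono r\<close> show ?thesis by blast
  next
    case False
    then have fibres: "\<And>x. finite (\<sigma> -` {x})" by blast
    let ?singletons = "range (\<lambda>n::'a. {n})"
    show ?thesis
    proof (cases "finite (\<sigma> -` ?singletons)")
      case True
      then have "infinite (- \<sigma> -` ?singletons)"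
        using infinite_UNIV_nat by (metis Compl_partition2 finite_UnI)
      from infinite_enumerate[OF this]
      obtain r :: "nat \<Rightarrow> nat" where r: "strict_mono r" "\<And>j. r j \<in> - \<sigma> -` ?singletons"
        by blast
      have "limitin (psi_topology AA) (\<sigma> \<circ> r) {} sequentially"
        by (rule limitin_psi_topology_empty[OF finite_fibres_subsequence[OF fibres r(1)]])
          (use r(2) in auto)
      with r(1) show ?thesis by blast
    next
      case False
      let ?N = "{n. {n} \<in> range \<sigma>}"
      have inj_singleton: "inj (\<lambda>n::'a. {n})" by (simp add: inj_def)
      have "\<sigma> -` ?singletons \<subseteq> \<sigma> -` ((\<lambda>n. {n}) ` ?N)" by auto
      with False have "infinite ((\<lambda>n. {n}) ` ?N)"
        by (meson finite_subset finite_vimage_finite_fibres[OF fibres])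
      then obtain B where B: "B \<in> AA" "infinite (?N \<inter> B)"
        using maximal by blast
      then have "infinite ((\<lambda>n. {n}) ` (?N \<inter> B))"
        by (simp add: finite_image_iff inj_on_subset[OF inj_singleton])
      moreover have "(\<lambda>n. {n}) ` (?N \<inter> B) \<subseteq> \<sigma> ` \<sigma> -` ((\<lambda>n. {n}) ` B)" by auto
      ultimately have "infinite (\<sigma> -` ((\<lambda>n. {n}) ` B))"
        by (meson finite_imageI finite_subset)
      from infinite_enumerate[OF this]
      obtain r :: "nat \<Rightarrow> nat" where r: "strict_mono r" "\<And>j. r j \<in> \<sigma> -` ((\<lambda>n. {n}) ` B)"
        by blast
      have "limitin (psi_topology AA) (\<sigma> \<circ> r) B sequentially"
        by (rule limitin_psi_topology_member[OF B(1) finite_fibres_subsequence[OF fibres r(1)]])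
          (use r(2) in auto)
      with r(1) show ?thesis by blast
    qed
  qed
qed

lemma finite_range_diff_eventually:
  assumes "eventually (\<lambda>c. r c \<in> S) sequentially"
  shows "finite (range r - S)"
proof -
  have "finite {c. r c \<notin> S}"
    using assms unfolding cofinite_eq_sequentially[symmetric] eventually_cofinite .
  moreover have "range r - S = r ` {c. r c \<notin> S}" by auto
  ultimately show ?thesis by simp
qed

lemma psi_limit_of_distinct_singletons:
  fixes r :: "nat \<Rightarrow> 'a"
  assumes AA: "maximal_almost_disjoint AA" and "inj r"
    and lim: "limitin (psi_topology AA) (\<lambda>c. {r c}) y sequentially"
  shows "y \<in> AA \<and> finite (range r - y)"
proof -
  have ev: "eventually (\<lambda>c. {r c} \<in> U) sequentially" if "psi_open AA U" "y \<in> U" for U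
    using lim that unfolding limitin_def openin_psi_topology by blast
  have "infinite (range r)"
    using \<open>inj r\<close> range_inj_infinite by blast
  show ?thesis
  proof (cases "y = {}")
    case True
    obtain B where B: "B \<in> AA" "infinite (range r \<inter> B)"
      using AA \<open>infinite (range r)\<close> unfolding maximal_almost_disjoint_def by blast
    then have "y \<in> - psi_nbhd B"
      using True by (auto simp: psi_nbhd_def)
    with psi_open_Compl_psi_nbhd B(1) AA have "eventually (\<lambda>c. {r c} \<in> - psi_nbhd B) sequentially"
      unfolding maximal_almost_disjoint_def by (blast intro: ev)
    then have "eventually (\<lambda>c. r c \<in> - B) sequentially"
      by (rule eventually_mono) (auto simp: psi_nbhd_def)
    then have "finite (range r \<inter> B)"
      using finite_range_diff_eventually by (metis Diff_Compl)
    with B(2) show ?thesis by blast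
  next
    case False
    show ?thesis
    proof (cases "y \<in> AA")
      case True
      have "eventually (\<lambda>c. {r c} \<in> psi_nbhd y) sequentially"
        using ev[OF psi_open_psi_nbhd[OF False]] by (simp add: psi_nbhd_def)
      then have "eventually (\<lambda>c. r c \<in> y) sequentially"
        by (rule eventually_mono) (auto simp: psi_nbhd_def)
      with True show ?thesis
        using finite_range_diff_eventually by blast
    next
      case notin: False
      have "eventually (\<lambda>c. {r c} = y) sequentially"
        using ev[OF psi_open_isolated[OF False notin]] by simp
      then obtain N where "\<And>c. c \<ge> N \<Longrightarrow> {r c} = y"
        unfolding eventually_sequentially by blast
      then have "r N = r (Suc N)" by (metis le_Suc_eq order_refl singleton_inject)
      with \<open>inj r\<close> show ?thesis by (simp add: inj_eq)
    qed
  qed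
qed

lemma not_seq_compact_product_psi_topology:
  fixes AA G :: "'i \<Rightarrow> nat set set"
  assumes AA: "\<And>k. k \<in> I \<Longrightarrow> maximal_almost_disjoint (AA k)"
    and unsplit: "\<And>k B. k \<in> I \<Longrightarrow> B \<in> AA k \<Longrightarrow> unsplit_by (G k) B"
    and F: "splitting_family F" "F \<subseteq> (\<Union>k\<in>I. G k)"
  shows "\<not> seq_compact_space (product_topology (\<lambda>k. psi_topology (AA k)) I)"
proof
  assume "seq_compact_space (product_topology (\<lambda>k. psi_topology (AA k)) I)"
  moreover have "range (\<lambda>n. restrict (\<lambda>k. {n}) I) \<subseteq> topspace (product_topology (\<lambda>k. psi_topology (AA k)) I)"
    by (auto simp: topspace_product_topology topspace_psi_topology)
  ultimately obtain r x where r: "strict_mono r"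
    and lim: "limitin (product_topology (\<lambda>k. psi_topology (AA k)) I)
                ((\<lambda>n. restrict (\<lambda>k. {n}) I) \<circ> r) x sequentially"
    unfolding seq_compact_space_def by blast
  have "inj r"
    using r strict_mono_imp_inj_on by blast
  then have "infinite (range r)"
    using range_inj_infinite by blast
  then obtain S where S: "S \<in> F" "infinite (range r \<inter> S)" "infinite (range r - S)"
    using F(1) unfolding splitting_family_def by blast
  then obtain k where k: "k \<in> I" "S \<in> G k"
    using F(2) by blast
  have "limitin (psi_topology (AA k)) (\<lambda>c. {r c}) (x k) sequentially"
    using lim k(1) unfolding limitin_componentwise by auto
  then have "x k \<in> AA k" "finite (range r - x k)"
    using psi_limit_of_distinct_singletons[OF AA[OF k(1)] \<open>inj r\<close>] by auto
  moreover have "range r \<inter> S \<subseteq> (range r - x k) \<union> (x k \<inter> S)"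
    and "range r - S \<subseteq> (range r - x k) \<union> (x k - S)" by auto
  ultimately show False
    using unsplit[OF k(1)] k(2) S(2,3) unfolding unsplit_by_def
    by (meson finite_UnI finite_subset)
qed

lemma unsplit_by_subset: "unsplit_by G B \<Longrightarrow> B' \<subseteq> B \<Longrightarrow> unsplit_by G B'"
  unfolding unsplit_by_def by (meson Diff_mono Int_mono finite_subset order_refl)

lemma finite_family_unsplit_subset:
  assumes "finite G" "infinite C"
  shows "\<exists>B\<subseteq>C. infinite B \<and> unsplit_by G B"
  using assms
proof (induction G rule: finite_induct)
  case empty
  then show ?case unfolding unsplit_by_def by auto
next
  case (insert S G)
  then obtain B where B: "B \<subseteq> C" "infinite B" "unsplit_by G B" by blast
  show ?case
  proof (cases "finite (B \<inter> S)")
    case True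
    with B show ?thesis unfolding unsplit_by_def by auto
  next
    case False
    have "unsplit_by (insert S G) (B \<inter> S)"
      using unsplit_by_subset[OF B(3), of "B \<inter> S"] unfolding unsplit_by_def
      by (simp add: Diff_eq)
    with False B(1) show ?thesis by blast
  qed
qed

lemma splitting_family_infinite: "splitting_family F \<Longrightarrow> infinite F"
  using finite_family_unsplit_subset[of F UNIV]
  unfolding splitting_family_def unsplit_by_def by blast

lemma infinite_nat_set_split:
  assumes "infinite (A :: nat set)"
  shows "\<exists>S. infinite (A \<inter> S) \<and> infinite (A - S)"
proof -
  let ?e = "enumerate A"
  have inj: "inj ?e" and range: "range ?e = A"
    using strict_mono_enumerate[OF assms] strict_mono_imp_inj_on range_enumerate[OF assms] by auto
  have "\<exists>n\<ge>m. even n" "\<exists>n\<ge>m. odd n" for m :: nat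
    by (rule exI[of _ "2 * m"], simp, rule exI[of _ "2 * m + 1"], simp)
  then have "infinite {n::nat. even n}" "infinite {n::nat. odd n}"
    unfolding infinite_nat_iff_unbounded_le by auto
  then have "infinite (?e ` {n. even n})" "infinite (?e ` {n. odd n})"
    using finite_imageD inj_on_subset[OF inj] by blast+
  moreover have "A \<inter> ?e ` {n. even n} = ?e ` {n. even n}" "A - ?e ` {n. even n} = ?e ` {n. odd n}"
    using inj range by (auto simp: inj_eq)
  ultimately show ?thesis by metis
qed

lemma splitting_family_infinite_sets: "splitting_family {S :: nat set. infinite S}"
  unfolding splitting_family_def using infinite_nat_set_split by (auto intro: infinite_super)

lemma ex_card_of_minimal:
  assumes "P A"
  shows "\<exists>B. P B \<and> (\<forall>C. P C \<longrightarrow> card_of B \<le>o card_of C)"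
proof -
  obtain r where "r \<in> card_of ` Collect P" "\<forall>r'\<in>card_of ` Collect P. r \<le>o r'"
    using exists_minim_Well_order[of "card_of ` Collect P"] assms card_of_Well_order by blast
  then show ?thesis by blast
qed

lemma split_num_minimal:
  obtains F where "splitting_family F" "\<And>G. splitting_family G \<Longrightarrow> |F| \<le>o |G|" "split_num = |F|"
proof -
  have "\<exists>F. splitting_family F \<and> (\<forall>G. splitting_family G \<longrightarrow> card_of F \<le>o card_of G)"
    using ex_card_of_minimal[of splitting_family, OF splitting_family_infinite_sets] .
  from someI_ex[OF this] show thesis
    using that unfolding split_num_def by blast
qed

lemma unsplit_subset_of_small_family:
  assumes small: "\<And>F. splitting_family F \<Longrightarrow> |G| <o |F|" and C: "infinite (C :: nat set)"
  shows "\<exists>B\<subseteq>C. infinite B \<and> unsplit_by G B"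
proof -
  let ?e = "enumerate C"
  have inj: "inj ?e" and range: "range ?e = C"
    using strict_mono_enumerate[OF C] strict_mono_imp_inj_on range_enumerate[OF C] by auto
  \<comment> \<open>pulled back along the enumeration of \<open>C\<close>, \<open>G\<close> is still too small to split every set\<close>
  define G' where "G' = (\<lambda>S. ?e -` S) ` {S\<in>G. infinite (?e -` S)}"
  have "|G'| \<le>o |G|"
    unfolding G'_def by (metis (no_types, lifting) card_of_image card_of_mono1 mem_Collect_eq
      ordLeq_transitive subsetI)
  then have "\<not> splitting_family G'"
    using small ordLeq_ordLess_trans ordLess_irreflexive by blast
  moreover have "\<forall>S\<in>G'. infinite S" unfolding G'_def by auto
  ultimately obtain A where A: "infinite A" "\<forall>S\<in>G'. finite (A \<inter> S) \<or> finite (A - S)"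
    unfolding splitting_family_def by blast
  have "unsplit_by G (?e ` A)"
    unfolding unsplit_by_def
  proof
    fix S assume "S \<in> G"
    have "?e ` A \<inter> S = ?e ` (A \<inter> ?e -` S)" "?e ` A - S = ?e ` (A - ?e -` S)" by auto
    with A(2) \<open>S \<in> G\<close> show "finite (?e ` A \<inter> S) \<or> finite (?e ` A - S)"
      unfolding G'_def by (cases "finite (?e -` S)") auto
  qed
  moreover have "?e ` A \<subseteq> C" "infinite (?e ` A)"
    using range A(1) inj by (auto dest: finite_imageD inj_on_subset)
  ultimately show ?thesis by blast
qed

lemma ex_maximal_almost_disjoint_unsplit:
  assumes unsplit_subset: "\<And>C. infinite C \<Longrightarrow> \<exists>B\<subseteq>C. infinite B \<and> unsplit_by G B"
  shows "\<exists>AA. maximal_almost_disjoint AA \<and> (\<forall>B\<in>AA. unsplit_by G B)"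
proof -
  define P where "P = {AA. AA \<subseteq> {B. infinite B \<and> unsplit_by G B} \<and> almost_disjoint AA}"
  have "\<Union>Ch \<in> P" if "Ch \<in> chains P" for Ch
    using that pairwise_chain_Union[of Ch]
    unfolding P_def chains_def almost_disjoint_def by blast
  then obtain M where M: "M \<in> P" and max: "\<And>X. X \<in> P \<Longrightarrow> M \<subseteq> X \<Longrightarrow> X = M"
    using Zorn_Lemma[of P] by blast
  have "\<exists>B\<in>M. infinite (C \<inter> B)" if "infinite C" for C
  proof (rule ccontr)
    assume none: "\<not> (\<exists>B\<in>M. infinite (C \<inter> B))"
    obtain B0 where B0: "B0 \<subseteq> C" "infinite B0" "unsplit_by G B0"
      using unsplit_subset[OF \<open>infinite C\<close>] by blast
    have "finite (B0 \<inter> B)" if "B \<in> M" for B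
      using none that B0(1) by (meson Int_mono finite_subset order_refl)
    then have "insert B0 M \<in> P"
      using M B0 unfolding P_def almost_disjoint_def by (auto simp: pairwise_insert Int_commute)
    then have "B0 \<in> M" using max by blast
    with none B0(1,2) show False by (metis Int_absorb1)
  qed
  with M show ?thesis
    unfolding P_def maximal_almost_disjoint_def by blast
qed

lemma card_of_under_ordLess:
  assumes "infinite A" "a \<in> A"
  shows "|under |A| a| <o |A|"
proof -
  have "under |A| a = underS |A| a \<union> {a}"
    using Refl_under_underS[of "|A|" a] assms(2) card_of_Well_order[of A]
    by (simp add: Field_card_of order_on_defs)
  moreover have "|underS |A| a| <o |A|"
    using card_of_underS[OF card_of_Card_order, of a A] assms(2) by (simp add: Field_card_of)
  moreover have "|{a}| <o |A|"
    using finite_ordLess_infinite[OF card_of_Well_order card_of_Well_order, of "{a}" A] assms(1)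
    by (simp add: Field_card_of)
  ultimately show ?thesis
    using card_of_Un_ordLess_infinite[OF assms(1)] by (metis Un_commute insert_is_Un)
qed

lemma ex_minimal_cofinal_cover:
  assumes "Well_order r"
  shows "\<exists>I\<subseteq>Field r. Field r \<subseteq> (\<Union>k\<in>I. under r k) \<and>
           (\<forall>K. K \<subseteq> Field r \<and> cofinal K r \<longrightarrow> card_of I \<le>o card_of K)"
proof (cases "\<exists>K. K \<subseteq> Field r \<and> cofinal K r")
  case True
  then obtain I where I: "I \<subseteq> Field r" "cofinal I r"
    and min: "\<forall>K. K \<subseteq> Field r \<and> cofinal K r \<longrightarrow> card_of I \<le>o card_of K"
    using ex_card_of_minimal[of "\<lambda>K. K \<subseteq> Field r \<and> cofinal K r"] by blast
  have "Field r \<subseteq> (\<Union>k\<in>I. under r k)"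
    using I(2) by (auto simp: cofinal_def under_def)
  with I(1) min show ?thesis by blast
next
  case False
  \<comment> \<open>then \<open>r\<close> has a greatest element or is empty, and \<open>Field r\<close> itself will do\<close>
  have "Field r \<subseteq> (\<Union>k\<in>Field r. under r k)"
    using assms by (auto simp: under_def order_on_defs refl_on_def)
  with False show ?thesis by blast
qed

theorem corollary4p4:
  shows "\<exists>(I::nat set set) (X::nat set \<Rightarrow> nat set topology).
           h_witness I X \<and>
           (\<forall>K. K \<subseteq> Field split_num \<and> cofinal K split_num \<longrightarrow> (card_of I, card_of K) \<in> ordLeq)"
proof -
  obtain F where F: "splitting_family F" and min: "\<And>G. splitting_family G \<Longrightarrow> |F| \<le>o |G|"
    and s: "split_num = |F|"
    using split_num_minimal by blast
  obtain I where I: "I \<subseteq> F" "F \<subseteq> (\<Union>k\<in>I. under |F| k)"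
    and cf: "\<forall>K. K \<subseteq> F \<and> cofinal K |F| \<longrightarrow> |I| \<le>o |K|"
    using ex_minimal_cofinal_cover[OF card_of_Well_order, of F] by (auto simp: Field_card_of)
  have "\<exists>AA. maximal_almost_disjoint AA \<and> (\<forall>B\<in>AA. unsplit_by (under |F| k) B)" if "k \<in> F" for k
    using card_of_under_ordLess[OF splitting_family_infinite[OF F] that] min ordLess_ordLeq_trans
    by (intro ex_maximal_almost_disjoint_unsplit unsplit_subset_of_small_family) blast+
  then obtain AA where AA: "\<And>k. k \<in> F \<Longrightarrow> maximal_almost_disjoint (AA k)"
    "\<And>k B. k \<in> F \<Longrightarrow> B \<in> AA k \<Longrightarrow> unsplit_by (under |F| k) B"
    by metis
  have "h_witness I (\<lambda>k. psi_topology (AA k))"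
    unfolding h_witness_def
  proof
    show "\<forall>k\<in>I. seq_compact_space (psi_topology (AA k))"
      using AA(1) I(1) by (auto intro!: seq_compact_psi_topology simp: maximal_almost_disjoint_def)
    show "\<not> seq_compact_space (product_topology (\<lambda>k. psi_topology (AA k)) I)"
      by (rule not_seq_compact_product_psi_topology[OF _ _ F I(2)]) (use AA I(1) in auto)
  qed
  with cf show ?thesis
    unfolding s Field_card_of by blast
qed

end
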